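(* For $i=1,2$ let $S_i:=\{c_i+A_ix:x\in\mathcal{B}\}$, where $c_i\in\mathbb{R}^N$ with $c_1\ne c_2$ and each $A_i$ is an $N\times N$ symmetric positive semidefinite matrix. Set $\zeta:=\|c_2-c_1\|_2$ and $e:=(c_1-c_2)/\|c_1-c_2\|_2$, and let $w_\cap$ denote the Gaussian width of $\mathbb{S}^{N-1}\cap\operatorname{cone}(S_1-S_2)$. If $\zeta>\|A_1e\|_2+\|A_2e\|_2$, then $$w_\cap\le\frac{\|A_1\|_F+\|A_2\|_F}{\zeta-\big(\|A_1e\|_2+\|A_2e\|_2\big)}+\frac{1}{\sqrt{2\pi}}.$$
   Context: $\mathcal{B}$ denotes the closed Euclidean unit ball in $\mathbb{R}^N$ centered at $0$, and $\mathbb{S}^{N-1}$ the unit sphere. $S_1-S_2:=\{u-v:u\in S_1,v\in S_2\}$ and $\operatorname{cone}(S_1-S_2):=\{tz:t\ge0,z\in S_1-S_2\}$. For a set $S\subseteq\mathbb{R}^N$, its Gaussian width is $w(S):=\mathbb{E}_g\big[\sup_{z\in S}\langle z,g\rangle\big]$, where $g$ has i.i.d. $\mathcal{N}(0,1)$ entries. $\|\cdot\|_F$ is the Frobenius norm. *)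

theory Defs
  imports "HOL-Probability.Probability"
begin

definition set_minus :: "'a::ab_group_add set \<Rightarrow> 'a set \<Rightarrow> 'a set" where
  "set_minus S1 S2 = {u - v | u v. u \<in> S1 \<and> v \<in> S2}"

definition cone_of :: "'a::real_vector set \<Rightarrow> 'a set" where
  "cone_of S = {t *\<^sub>R z | t z. 0 \<le> t \<and> z \<in> S}"

definition gaussian_vec_measure :: "('n::finite \<Rightarrow> real) measure" where
  "gaussian_vec_measure = PiM UNIV (\<lambda>_. density lborel std_normal_density)"

definition gaussian_width :: "(real ^ 'n::finite) set \<Rightarrow> real" where
  "gaussian_width S =
     integral\<^sup>L gaussian_vec_measure (\<lambda>g. SUP z\<in>S. z \<bullet> (\<chi> i. g i))"

definition frob_norm :: "real ^ 'n::finite ^ 'n \<Rightarrow> real" where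
  "frob_norm A = sqrt (\<Sum>i\<in>UNIV. \<Sum>j\<in>UNIV. (A $ i $ j)\<^sup>2)"

definition sym_psd :: "real ^ 'n::finite ^ 'n \<Rightarrow> bool" where
  "sym_psd A \<longleftrightarrow> transpose A = A \<and> (\<forall>x. 0 \<le> x \<bullet> (A *v x))"

end

theory Submission
  imports Defs
begin

text \<open>A point of the cone has the form \<open>z = t ((c1 - c2) + u)\<close> with \<open>t \<ge> 0\<close> and
  \<open>u = A1 a - A2 b\<close> for \<open>a, b\<close> in the unit ball, so \<open>u \<bullet> y \<le> \<parallel>A1 y\<parallel> + \<parallel>A2 y\<parallel>\<close>.
  If \<open>\<parallel>z\<parallel> = 1\<close>, the component \<open>z \<bullet> e = t (\<zeta> + u \<bullet> e)\<close> lies in \<open>[0, 1]\<close>, and as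
  \<open>\<zeta> + u \<bullet> e \<ge> D = \<zeta> - (\<parallel>A1 e\<parallel> + \<parallel>A2 e\<parallel>) > 0\<close> this forces \<open>t \<le> 1 / D\<close>. Splitting
  \<open>g = (g \<bullet> e) e + P g\<close> with \<open>P\<close> the projection onto \<open>e\<^sup>\<bottom>\<close> gives, uniformly in \<open>z\<close>,
  \<open>z \<bullet> g \<le> max 0 (e \<bullet> g) + (\<parallel>A1 P g\<parallel> + \<parallel>A2 P g\<parallel>) / D\<close>.
  For a standard Gaussian \<open>g\<close>, \<open>e \<bullet> g\<close> is standard normal, so \<open>E max 0 (e \<bullet> g) = 1 / sqrt (2 \<pi>)\<close>,
  and \<open>E \<parallel>A P g\<parallel> \<le> \<parallel>A P\<parallel>\<^sub>F \<le> \<parallel>A\<parallel>\<^sub>F\<close>.\<close>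

section \<open>The standard Gaussian vector\<close>

lemma prob_space_gaussian_vec_measure:
  "prob_space (gaussian_vec_measure :: ('n::finite \<Rightarrow> real) measure)"
  unfolding gaussian_vec_measure_def
  by (intro prob_space_PiM prob_space_normal_density) simp

lemma sets_gaussian_vec_measure:
  "sets (gaussian_vec_measure :: ('n::finite \<Rightarrow> real) measure) = sets (PiM UNIV (\<lambda>_. borel))"
  unfolding gaussian_vec_measure_def by (rule sets_PiM_cong) auto

lemma distr_gaussian_vec_component:
  "distr (gaussian_vec_measure :: ('n::finite \<Rightarrow> real) measure) lborel (\<lambda>g. g i)
     = density lborel std_normal_density"
proof -
  have "distr (gaussian_vec_measure :: ('n \<Rightarrow> real) measure) lborel (\<lambda>g. g i)
      = distr gaussian_vec_measure (density lborel std_normal_density) (\<lambda>g. g i)"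
    by (rule distr_cong) auto
  also have "\<dots> = density lborel std_normal_density"
    unfolding gaussian_vec_measure_def
    by (rule distr_PiM_component) (auto intro: prob_space_normal_density)
  finally show ?thesis .
qed

lemma measurable_gaussian_vec_component:
  "(\<lambda>g. g i) \<in> borel_measurable (gaussian_vec_measure :: ('n::finite \<Rightarrow> real) measure)"
  using measurable_component_singleton[of i UNIV "\<lambda>_. borel"]
  by (simp add: measurable_cong_sets[OF sets_gaussian_vec_measure])

lemma distributed_gaussian_vec_component:
  "distributed (gaussian_vec_measure :: ('n::finite \<Rightarrow> real) measure) lborel (\<lambda>g. g i)
     (\<lambda>x. ennreal (normal_density 0 1 x))"
  unfolding distributed_def
  using distr_gaussian_vec_component measurable_gaussian_vec_component by auto

lemma indep_vars_gaussian_vec_components: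
  "prob_space.indep_vars (gaussian_vec_measure :: ('n::finite \<Rightarrow> real) measure)
     (\<lambda>_. borel) (\<lambda>i g. g i) UNIV"
proof -
  interpret prob_space "gaussian_vec_measure :: ('n \<Rightarrow> real) measure"
    by (rule prob_space_gaussian_vec_measure)
  have "distr gaussian_vec_measure (PiM UNIV (\<lambda>_. borel)) (\<lambda>g. \<lambda>i\<in>UNIV. g i)
      = distr (gaussian_vec_measure :: ('n \<Rightarrow> real) measure) (PiM UNIV (\<lambda>_. borel)) (\<lambda>g. g)"
    by (simp add: restrict_def)
  also have "\<dots> = gaussian_vec_measure"
    by (rule distr_id2) (simp add: sets_gaussian_vec_measure)
  also have "\<dots> = PiM UNIV (\<lambda>i. distr gaussian_vec_measure borel (\<lambda>g. g i))"
  proof -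
    have "distr (gaussian_vec_measure :: ('n \<Rightarrow> real) measure) borel (\<lambda>g. g i)
        = density lborel std_normal_density" for i
      using distr_gaussian_vec_component[of i] by (metis distr_cong sets_lborel)
    then show ?thesis by (simp only:) (simp add: gaussian_vec_measure_def)
  qed
  finally show ?thesis
    by (subst indep_vars_iff_distr_eq_PiM) (auto intro: measurable_gaussian_vec_component)
qed

lemma borel_measurable_vec_lambda:
  "vec_lambda \<in> borel_measurable (PiM (UNIV::'n::finite set) (\<lambda>_. borel::real measure))"
proof (subst borel_measurable_euclidean_space, intro ballI)
  fix b :: "real^'n" assume "b \<in> Basis"
  then obtain j where b: "b = axis j 1" by (auto simp: Basis_vec_def)
  have "(\<lambda>g. g j) \<in> borel_measurable (PiM (UNIV::'n set) (\<lambda>_. borel::real measure))"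
    using measurable_component_singleton[of j UNIV "\<lambda>_. borel::real measure"] by simp
  then show "(\<lambda>g. vec_lambda g \<bullet> b) \<in> borel_measurable (PiM UNIV (\<lambda>_. borel))"
    by (simp add: b inner_axis)
qed

lemma continuous_on_borel_measurable_gaussian_vec:
  fixes f :: "real^'n::finite \<Rightarrow> real"
  assumes "continuous_on UNIV f"
  shows "(\<lambda>g. f (\<chi> i. g i)) \<in> borel_measurable gaussian_vec_measure"
  using measurable_compose[OF borel_measurable_vec_lambda borel_measurable_continuous_onI[OF assms]]
  by (simp add: measurable_cong_sets[OF sets_gaussian_vec_measure])

lemma distributed_gaussian_vec_inner:
  fixes v :: "real^'n::finite"
  assumes "v \<noteq> 0"
  shows "distributed gaussian_vec_measure lborel (\<lambda>g. v \<bullet> (\<chi> i. g i))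
           (\<lambda>x. ennreal (normal_density 0 (norm v) x))"
proof -
  interpret prob_space "gaussian_vec_measure :: ('n \<Rightarrow> real) measure"
    by (rule prob_space_gaussian_vec_measure)
  define I where "I = {i. v$i \<noteq> 0}"
  have "I \<noteq> {}" using assms unfolding I_def by (auto simp: vec_eq_iff)
  have indep: "indep_vars (\<lambda>_. borel) (\<lambda>i g. v$i * g i) I"
    using indep_vars_compose2[OF indep_vars_gaussian_vec_components, of "\<lambda>i x. v$i * x" "\<lambda>_. borel"]
    by (auto intro: indep_vars_subset)
  have "distributed gaussian_vec_measure lborel (\<lambda>g. v$i * g i) (normal_density 0 \<bar>v$i\<bar>)"
    if "i \<in> I" for i
    using normal_density_affine[OF distributed_gaussian_vec_component, of "v$i" 0 i] that
    unfolding I_def by simp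
  then have "distributed gaussian_vec_measure lborel (\<lambda>g. \<Sum>i\<in>I. v$i * g i)
      (normal_density (\<Sum>i\<in>I. 0) (sqrt (\<Sum>i\<in>I. \<bar>v$i\<bar>\<^sup>2)))"
    using \<open>I \<noteq> {}\<close> by (intro sum_indep_normal[OF _ _ indep]) (auto simp: I_def)
  moreover have "(\<Sum>i\<in>I. v$i * g i) = v \<bullet> (\<chi> i. g i)" for g
  proof -
    have "(\<Sum>i\<in>I. v$i * g i) = (\<Sum>i\<in>UNIV. v$i * g i)"
      by (rule sum.mono_neutral_left) (auto simp: I_def)
    then show ?thesis by (simp add: inner_vec_def)
  qed
  moreover have "(\<Sum>i\<in>I. \<bar>v$i\<bar>\<^sup>2) = (\<Sum>i\<in>UNIV. \<bar>v$i\<bar>\<^sup>2)"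
    by (rule sum.mono_neutral_left) (auto simp: I_def)
  ultimately show ?thesis by (simp add: norm_vec_def L2_set_def)
qed

lemma
  fixes v :: "real^'n::finite"
  shows integrable_gaussian_vec_inner_square:
      "integrable gaussian_vec_measure (\<lambda>g. (v \<bullet> (\<chi> i. g i))\<^sup>2)"
    and integral_gaussian_vec_inner_square:
      "integral\<^sup>L gaussian_vec_measure (\<lambda>g. (v \<bullet> (\<chi> i. g i))\<^sup>2) = (norm v)\<^sup>2"
proof -
  have "integrable gaussian_vec_measure (\<lambda>g. (v \<bullet> (\<chi> i. g i))\<^sup>2) \<and>
        integral\<^sup>L gaussian_vec_measure (\<lambda>g. (v \<bullet> (\<chi> i. g i))\<^sup>2) = (norm v)\<^sup>2"
  proof (cases "v = 0")
    case False
    then have "0 < norm v" by simp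
    note distr = distributed_gaussian_vec_inner[OF False]
    have "integrable lborel (\<lambda>x. normal_density 0 (norm v) x * x\<^sup>2)"
      using integrable_normal_moment[OF \<open>0 < norm v\<close>, of 0 2] by simp
    moreover have "integral\<^sup>L lborel (\<lambda>x. normal_density 0 (norm v) x * x\<^sup>2) = (norm v)\<^sup>2"
      using integral_normal_moment_even[OF \<open>0 < norm v\<close>, of 0 1] by simp
    ultimately show ?thesis
      using distributed_integrable[OF distr, of "\<lambda>x. x\<^sup>2"]
        distributed_integral[OF distr, of "\<lambda>x. x\<^sup>2"] normal_density_nonneg
      by auto
  qed simp
  then show "integrable gaussian_vec_measure (\<lambda>g. (v \<bullet> (\<chi> i. g i))\<^sup>2)"
    and "integral\<^sup>L gaussian_vec_measure (\<lambda>g. (v \<bullet> (\<chi> i. g i))\<^sup>2) = (norm v)\<^sup>2"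
    by auto
qed

lemma
  shows integrable_std_normal_positive_part:
      "integrable lborel (\<lambda>x. normal_density 0 1 x * max 0 x)"
    and integral_std_normal_positive_part:
      "integral\<^sup>L lborel (\<lambda>x. normal_density 0 1 x * max 0 x) = 1 / sqrt (2 * pi)"
proof -
  have split: "normal_density 0 1 x * max 0 x
      = (normal_density 0 1 x * \<bar>x\<bar> + normal_density 0 1 x * x) / 2" for x :: real
    by (auto simp: max_def field_simps)
  have abs: "integrable lborel (\<lambda>x. normal_density 0 1 x * \<bar>x\<bar>)"
    "integral\<^sup>L lborel (\<lambda>x. normal_density 0 1 x * \<bar>x\<bar>) = sqrt (2 / pi)"
    using integrable_normal_moment_abs[of 1 0 1] integral_normal_moment_abs_odd[of 1 0 0] by simp_all
  have id: "integrable lborel (\<lambda>x. normal_density 0 1 x * x)"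
    "integral\<^sup>L lborel (\<lambda>x. normal_density 0 1 x * x) = 0"
    using integrable_normal_moment_nz_1[of 1 0] integral_normal_moment_nz_1[of 1 0] by simp_all
  show "integrable lborel (\<lambda>x. normal_density 0 1 x * max 0 x)"
    unfolding split using abs id by auto
  have "integral\<^sup>L lborel (\<lambda>x. normal_density 0 1 x * max 0 x) = sqrt (2 / pi) / 2"
    unfolding split using abs id by simp
  also have "\<dots> = 1 / sqrt (2 * pi)"
    by (simp add: real_sqrt_divide real_sqrt_mult field_simps)
  finally show "integral\<^sup>L lborel (\<lambda>x. normal_density 0 1 x * max 0 x) = 1 / sqrt (2 * pi)" .
qed

lemma
  fixes v :: "real^'n::finite"
  assumes "norm v = 1"
  shows integrable_gaussian_vec_inner_positive_part:
      "integrable gaussian_vec_measure (\<lambda>g. max 0 (v \<bullet> (\<chi> i. g i)))"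
    and integral_gaussian_vec_inner_positive_part:
      "integral\<^sup>L gaussian_vec_measure (\<lambda>g. max 0 (v \<bullet> (\<chi> i. g i))) = 1 / sqrt (2 * pi)"
proof -
  have "v \<noteq> 0" using assms by auto
  note distr = distributed_gaussian_vec_inner[OF this, unfolded assms]
  show "integrable gaussian_vec_measure (\<lambda>g. max 0 (v \<bullet> (\<chi> i. g i)))"
    using distributed_integrable[OF distr, of "max 0"] integrable_std_normal_positive_part
      normal_density_nonneg by auto
  show "integral\<^sup>L gaussian_vec_measure (\<lambda>g. max 0 (v \<bullet> (\<chi> i. g i))) = 1 / sqrt (2 * pi)"
    using distributed_integral[OF distr, of "max 0"] integral_std_normal_positive_part
      normal_density_nonneg by auto
qed

lemma norm_matrix_vector_mult_squared:
  "(norm (B *v x))\<^sup>2 = (\<Sum>i\<in>UNIV. (B$i \<bullet> x)\<^sup>2)" for x :: "real^'n::finite"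
  by (simp add: norm_vec_def L2_set_def matrix_vector_mul_component sum_nonneg)

lemma frob_norm_squared: "(frob_norm A)\<^sup>2 = (\<Sum>i\<in>UNIV. (norm (A$i))\<^sup>2)"
  by (simp add: frob_norm_def norm_vec_def L2_set_def sum_nonneg)

lemma frob_norm_nonneg: "0 \<le> frob_norm A"
  by (simp add: frob_norm_def sum_nonneg)

lemma
  fixes B :: "real^'n::finite^'n"
  shows integrable_gaussian_vec_norm_matrix_vector_mult:
      "integrable gaussian_vec_measure (\<lambda>g. norm (B *v (\<chi> i. g i)))"
    and integral_gaussian_vec_norm_matrix_vector_mult_le:
      "integral\<^sup>L gaussian_vec_measure (\<lambda>g. norm (B *v (\<chi> i. g i))) \<le> frob_norm B"
proof -
  interpret prob_space "gaussian_vec_measure :: ('n \<Rightarrow> real) measure"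
    by (rule prob_space_gaussian_vec_measure)
  define F where "F = frob_norm B"
  have sq_integrable: "integrable gaussian_vec_measure (\<lambda>g. (norm (B *v (\<chi> i. g i)))\<^sup>2)"
    unfolding norm_matrix_vector_mult_squared
    by (intro Bochner_Integration.integrable_sum integrable_gaussian_vec_inner_square)
  have sq_integral: "integral\<^sup>L gaussian_vec_measure (\<lambda>g. (norm (B *v (\<chi> i. g i)))\<^sup>2) = F\<^sup>2"
    unfolding norm_matrix_vector_mult_squared F_def frob_norm_squared
    by (simp add: integrable_gaussian_vec_inner_square integral_gaussian_vec_inner_square)
  show integrable: "integrable gaussian_vec_measure (\<lambda>g. norm (B *v (\<chi> i. g i)))"
  proof (rule Bochner_Integration.integrable_bound)
    show "integrable gaussian_vec_measure (\<lambda>g. 1 + (norm (B *v (\<chi> i. g i)))\<^sup>2)"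
      using sq_integrable by simp
    show "(\<lambda>g. norm (B *v (\<chi> i. g i))) \<in> borel_measurable gaussian_vec_measure"
      by (rule continuous_on_borel_measurable_gaussian_vec[where f="\<lambda>x. norm (B *v x)"])
         (intro continuous_intros)
    have "y \<le> 1 + y\<^sup>2" for y :: real
      using sum_squares_bound[of y 1] zero_le_power2[of y] by (smt (verit) one_power2)
    then show "AE g in gaussian_vec_measure.
        norm (norm (B *v (\<chi> i. g i))) \<le> norm (1 + (norm (B *v (\<chi> i. g i)))\<^sup>2)"
      by (intro AE_I2) simp
  qed
  show "integral\<^sup>L gaussian_vec_measure (\<lambda>g. norm (B *v (\<chi> i. g i))) \<le> frob_norm B"
  proof (cases "F = 0")
    case True
    then have "B = 0"
      using frob_norm_squared[of B] by (simp add: F_def sum_nonneg_eq_0_iff vec_eq_iff)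
    then show ?thesis by (simp add: frob_norm_nonneg)
  next
    case False
    then have "0 < F" using frob_norm_nonneg[of B] by (simp add: F_def)
    \<comment> \<open>AM-GM, \<open>y \<le> (y\<^sup>2 + F\<^sup>2) / (2 F)\<close>, stands in for Jensen's inequality \<open>E y \<le> sqrt (E y\<^sup>2)\<close>.\<close>
    have amgm: "y \<le> (y\<^sup>2 + F\<^sup>2) / (2 * F)" for y :: real
      using \<open>0 < F\<close> sum_squares_bound[of y F] by (simp add: field_simps power2_eq_square)
    have "integral\<^sup>L gaussian_vec_measure (\<lambda>g. norm (B *v (\<chi> i. g i)))
        \<le> integral\<^sup>L gaussian_vec_measure (\<lambda>g. ((norm (B *v (\<chi> i. g i)))\<^sup>2 + F\<^sup>2) / (2 * F))"
      using integrable sq_integrable by (intro integral_mono amgm) auto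
    also have "\<dots> = (F\<^sup>2 + F\<^sup>2) / (2 * F)"
      using sq_integrable sq_integral by (simp add: prob_space)
    also have "\<dots> = F"
      using \<open>0 < F\<close> by (simp add: power2_eq_square)
    finally show ?thesis by (simp add: F_def)
  qed
qed

lemma obtain_matrix_comp_orthogonal_projection:
  fixes A :: "real^'n::finite^'n" and e :: "real^'n"
  assumes "norm e = 1"
  obtains B where "\<And>x. B *v x = A *v (x - (x \<bullet> e) *\<^sub>R e)" and "frob_norm B \<le> frob_norm A"
proof
  define B where "B = (\<chi> i. A$i - (A$i \<bullet> e) *\<^sub>R e)"
  show "B *v x = A *v (x - (x \<bullet> e) *\<^sub>R e)" for x
    by (simp add: B_def vec_eq_iff matrix_vector_mul_component inner_diff_left inner_diff_right
        inner_commute algebra_simps)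
  have "e \<bullet> e = 1"
    using assms by (simp add: norm_eq_1)
  then have "(norm (B$i))\<^sup>2 = (norm (A$i))\<^sup>2 - (A$i \<bullet> e)\<^sup>2" for i
    unfolding power2_norm_eq_inner
    by (simp add: B_def inner_diff_left inner_diff_right inner_commute power2_eq_square)
  then have "(frob_norm B)\<^sup>2 \<le> (frob_norm A)\<^sup>2"
    unfolding frob_norm_squared by (intro sum_mono) simp
  then show "frob_norm B \<le> frob_norm A"
    using frob_norm_nonneg by (rule power2_le_imp_le)
qed

lemma
  fixes A :: "real^'n::finite^'n" and e :: "real^'n"
  assumes "norm e = 1"
  shows integrable_gaussian_vec_norm_orthogonal_projection:
      "integrable gaussian_vec_measure
         (\<lambda>g. norm (A *v ((\<chi> i. g i) - ((\<chi> i. g i) \<bullet> e) *\<^sub>R e)))"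
    and integral_gaussian_vec_norm_orthogonal_projection_le:
      "integral\<^sup>L gaussian_vec_measure
         (\<lambda>g. norm (A *v ((\<chi> i. g i) - ((\<chi> i. g i) \<bullet> e) *\<^sub>R e))) \<le> frob_norm A"
proof -
  obtain B where B: "\<And>x. B *v x = A *v (x - (x \<bullet> e) *\<^sub>R e)" and "frob_norm B \<le> frob_norm A"
    using obtain_matrix_comp_orthogonal_projection[OF assms, of A] by metis
  show "integrable gaussian_vec_measure
      (\<lambda>g. norm (A *v ((\<chi> i. g i) - ((\<chi> i. g i) \<bullet> e) *\<^sub>R e)))"
    using integrable_gaussian_vec_norm_matrix_vector_mult[of B] by (simp add: B)
  show "integral\<^sup>L gaussian_vec_measure
      (\<lambda>g. norm (A *v ((\<chi> i. g i) - ((\<chi> i. g i) \<bullet> e) *\<^sub>R e))) \<le> frob_norm A"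
    using integral_gaussian_vec_norm_matrix_vector_mult_le[of B] \<open>frob_norm B \<le> frob_norm A\<close>
    by (simp add: B)
qed

section \<open>Geometry of the cone of differences\<close>

lemma matrix_vector_mult_uminus_right: "A *v (- x) = - (A *v x)" for A :: "real^'n::finite^'m"
  by (metis scaleR_minus1_left matrix_vector_mult_scaleR)

lemma inner_matrix_vector_mult_le_norm:
  fixes A :: "real^'n::finite^'n"
  assumes "transpose A = A" and "norm a \<le> 1"
  shows "(A *v a) \<bullet> y \<le> norm (A *v y)"
proof -
  have "(A *v a) \<bullet> y = a \<bullet> (A *v y)"
    by (metis assms(1) dot_lmul_matrix vector_transpose_matrix)
  also have "\<dots> \<le> norm a * norm (A *v y)"
    by (rule norm_cauchy_schwarz)
  also have "\<dots> \<le> norm (A *v y)"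
    using assms(2) by (simp add: mult_left_le_one_le)
  finally show ?thesis .
qed

lemma set_minus_ellipsoids_elim:
  fixes c1 c2 :: "real^'n::finite" and A1 A2 :: "real^'n^'n"
  assumes "transpose A1 = A1" and "transpose A2 = A2"
    and "v \<in> set_minus ((\<lambda>x. c1 + A1 *v x) ` cball 0 1) ((\<lambda>x. c2 + A2 *v x) ` cball 0 1)"
  obtains u where "v = (c1 - c2) + u" and "\<And>y. u \<bullet> y \<le> norm (A1 *v y) + norm (A2 *v y)"
proof -
  obtain a b where "norm a \<le> 1" "norm b \<le> 1" and v: "v = (c1 + A1 *v a) - (c2 + A2 *v b)"
    using assms(3) by (auto simp: set_minus_def)
  show thesis
  proof (rule that)
    show "v = (c1 - c2) + (A1 *v a - A2 *v b)"
      by (simp add: v algebra_simps)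
    show "(A1 *v a - A2 *v b) \<bullet> y \<le> norm (A1 *v y) + norm (A2 *v y)" for y
      using inner_matrix_vector_mult_le_norm[OF assms(1) \<open>norm a \<le> 1\<close>, of y]
        inner_matrix_vector_mult_le_norm[OF assms(2) \<open>norm b \<le> 1\<close>, of "-y"]
      by (simp add: inner_diff_left matrix_vector_mult_uminus_right)
  qed
qed

lemma inner_unit_ray_point_le:
  fixes e u x z :: "'a::real_inner"
  assumes "norm e = 1" and "norm z = 1" and z: "z = t *\<^sub>R (\<zeta> *\<^sub>R e + u)" and "0 \<le> t"
    and "0 < D" and "D \<le> \<zeta> + u \<bullet> e"
    and "u \<bullet> (x - (x \<bullet> e) *\<^sub>R e) \<le> Y" and "0 \<le> Y"
  shows "z \<bullet> x \<le> max 0 (e \<bullet> x) + Y / D"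
proof -
  have "e \<bullet> e = 1"
    using assms(1) by (simp add: norm_eq_1)
  define s where "s = z \<bullet> e"
  have s: "s = t * (\<zeta> + u \<bullet> e)"
    by (simp add: s_def z inner_add_left \<open>e \<bullet> e = 1\<close> algebra_simps)
  have "s \<le> 1"
    using norm_cauchy_schwarz[of z e] assms(1,2) by (simp add: s_def)
  have "0 \<le> s"
    using s assms(4-6) by simp
  have "t * D \<le> 1"
    using mult_left_mono[OF assms(6,4)] s \<open>s \<le> 1\<close> by simp
  then have "t \<le> 1 / D"
    using assms(5) by (simp add: field_simps)
  define P where "P = x - (x \<bullet> e) *\<^sub>R e"
  have "e \<bullet> P = 0"
    by (simp add: P_def inner_diff_right \<open>e \<bullet> e = 1\<close> inner_commute)
  have "z \<bullet> x = s * (e \<bullet> x) + z \<bullet> P"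
    by (simp add: P_def s_def inner_diff_right inner_commute)
  also have "z \<bullet> P = t * (u \<bullet> P)"
    by (simp add: z inner_add_left \<open>e \<bullet> P = 0\<close>)
  also have "s * (e \<bullet> x) \<le> max 0 (e \<bullet> x)"
    using \<open>0 \<le> s\<close> \<open>s \<le> 1\<close> mult_left_le_one_le[of "e \<bullet> x" s]
    by (cases "0 \<le> e \<bullet> x") (auto simp: mult_nonneg_nonpos)
  also have "t * (u \<bullet> P) \<le> Y / D"
  proof -
    have "t * (u \<bullet> P) \<le> t * Y"
      using assms(4,7) by (simp add: P_def mult_left_mono)
    also have "\<dots> \<le> Y / D"
      using mult_right_mono[OF \<open>t \<le> 1 / D\<close> assms(8)] by simp
    finally show ?thesis .
  qed
  finally show ?thesis by simp
qed

lemma inner_sphere_cone_ellipsoids_le: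
  fixes c1 c2 x :: "real^'n::finite" and A1 A2 :: "real^'n^'n"
  assumes "transpose A1 = A1" and "transpose A2 = A2" and "c1 \<noteq> c2"
  defines "e \<equiv> (c1 - c2) /\<^sub>R norm (c1 - c2)"
  assumes "norm (A1 *v e) + norm (A2 *v e) < norm (c1 - c2)"
    and "z \<in> sphere 0 1 \<inter>
      cone_of (set_minus ((\<lambda>x. c1 + A1 *v x) ` cball 0 1) ((\<lambda>x. c2 + A2 *v x) ` cball 0 1))"
  shows "z \<bullet> x \<le> max 0 (e \<bullet> x)
    + (norm (A1 *v (x - (x \<bullet> e) *\<^sub>R e)) + norm (A2 *v (x - (x \<bullet> e) *\<^sub>R e)))
      / (norm (c1 - c2) - (norm (A1 *v e) + norm (A2 *v e)))"
proof -
  obtain t v where "0 \<le> t" and z: "z = t *\<^sub>R v"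
    and v: "v \<in> set_minus ((\<lambda>x. c1 + A1 *v x) ` cball 0 1) ((\<lambda>x. c2 + A2 *v x) ` cball 0 1)"
    using assms(6) by (auto simp: cone_of_def)
  obtain u where "v = (c1 - c2) + u" and u: "\<And>y. u \<bullet> y \<le> norm (A1 *v y) + norm (A2 *v y)"
    using set_minus_ellipsoids_elim[OF assms(1,2) v] by blast
  moreover have "c1 - c2 = norm (c1 - c2) *\<^sub>R e"
    using assms(3) by (simp add: e_def)
  ultimately have z_ray: "z = t *\<^sub>R (norm (c1 - c2) *\<^sub>R e + u)"
    by (simp add: z)
  have "- (u \<bullet> e) \<le> norm (A1 *v e) + norm (A2 *v e)"
    using u[of "-e"] by (simp add: matrix_vector_mult_uminus_right)
  show ?thesis
  proof (rule inner_unit_ray_point_le[OF _ _ z_ray \<open>0 \<le> t\<close>])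
    show "norm e = 1"
      using assms(3) by (simp add: e_def)
    show "norm z = 1"
      using assms(6) by simp
  qed (use assms(5) \<open>- (u \<bullet> e) \<le> _\<close> u in auto)
qed

lemma normalized_difference_mem_sphere_cone:
  fixes c1 c2 :: "'a::real_normed_vector"
  assumes "c1 \<in> S1" and "c2 \<in> S2" and "c1 \<noteq> c2"
  shows "(c1 - c2) /\<^sub>R norm (c1 - c2) \<in> sphere 0 1 \<inter> cone_of (set_minus S1 S2)"
proof -
  have "c1 - c2 \<in> set_minus S1 S2"
    using assms(1,2) by (auto simp: set_minus_def)
  then show ?thesis
    using assms(3) by (auto simp: cone_of_def intro!: exI[of _ "inverse (norm (c1 - c2))"])
qed

section \<open>The width bound\<close>

text \<open>If the supremum is not integrable, \<open>gaussian_width\<close> is the junk value \<open>0\<close>;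
  hence the assumption \<open>0 \<le> integral\<^sup>L gaussian_vec_measure H\<close>.\<close>

lemma gaussian_width_le_integral:
  fixes S :: "(real^'n::finite) set"
  assumes "S \<noteq> {}" and "\<And>z g. z \<in> S \<Longrightarrow> z \<bullet> (\<chi> i. g i) \<le> H g"
    and "integrable gaussian_vec_measure H" and "0 \<le> integral\<^sup>L gaussian_vec_measure H"
  shows "gaussian_width S \<le> integral\<^sup>L gaussian_vec_measure H"
proof (cases "integrable gaussian_vec_measure (\<lambda>g. SUP z\<in>S. z \<bullet> (\<chi> i. g i))")
  case True
  have "(SUP z\<in>S. z \<bullet> (\<chi> i. g i)) \<le> H g" for g
    using assms(1,2) by (rule cSUP_least)
  then show ?thesis
    unfolding gaussian_width_def using True assms(3) by (rule integral_mono[rotated 2])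
next
  case False
  then show ?thesis
    using assms(4) by (simp add: gaussian_width_def not_integrable_integral_eq)
qed

theorem theorem2:
  fixes c1 c2 :: "real ^ 'n::finite" and A1 A2 :: "real ^ 'n ^ 'n"
  assumes "c1 \<noteq> c2"
    and "sym_psd A1" and "sym_psd A2"
    and "norm (c2 - c1) > norm (A1 *v ((c1 - c2) /\<^sub>R norm (c1 - c2)))
                          + norm (A2 *v ((c1 - c2) /\<^sub>R norm (c1 - c2)))"
  shows "gaussian_width (sphere 0 1 \<inter> cone_of (set_minus
            ((\<lambda>x. c1 + A1 *v x) ` cball 0 1) ((\<lambda>x. c2 + A2 *v x) ` cball 0 1)))
         \<le> (frob_norm A1 + frob_norm A2)
             / (norm (c2 - c1) - (norm (A1 *v ((c1 - c2) /\<^sub>R norm (c1 - c2)))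
                                 + norm (A2 *v ((c1 - c2) /\<^sub>R norm (c1 - c2)))))
           + 1 / sqrt (2 * pi)"
proof -
  let "gaussian_width ?S \<le> _" = ?thesis
  define e where "e = (c1 - c2) /\<^sub>R norm (c1 - c2)"
  define D where "D = norm (c1 - c2) - (norm (A1 *v e) + norm (A2 *v e))"
  define P where "P = (\<lambda>g. (\<chi> i. g i) - ((\<chi> i. g i) \<bullet> e) *\<^sub>R e)"
  define H where "H = (\<lambda>g. max 0 (e \<bullet> (\<chi> i. g i)) + (norm (A1 *v P g) + norm (A2 *v P g)) / D)"
  have sym: "transpose A1 = A1" "transpose A2 = A2"
    using assms(2,3) by (auto simp: sym_psd_def)
  have "norm e = 1" and "0 < D"
    using assms(1,4) by (simp_all add: e_def D_def norm_minus_commute)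
  note integrals = integrable_gaussian_vec_inner_positive_part[OF \<open>norm e = 1\<close>]
    integral_gaussian_vec_inner_positive_part[OF \<open>norm e = 1\<close>]
    integrable_gaussian_vec_norm_orthogonal_projection[OF \<open>norm e = 1\<close>]
  have "c1 \<in> (\<lambda>x. c1 + A1 *v x) ` cball 0 1" "c2 \<in> (\<lambda>x. c2 + A2 *v x) ` cball 0 1"
    using image_eqI[of c1 "\<lambda>x. c1 + A1 *v x" 0] image_eqI[of c2 "\<lambda>x. c2 + A2 *v x" 0] by simp_all
  then have "?S \<noteq> {}"
    using normalized_difference_mem_sphere_cone[OF _ _ assms(1)] by (metis empty_iff)
  then have "gaussian_width ?S \<le> integral\<^sup>L gaussian_vec_measure H"
  proof (rule gaussian_width_le_integral)
    show "z \<bullet> (\<chi> i. g i) \<le> H g" if "z \<in> ?S" for z g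
      using inner_sphere_cone_ellipsoids_le[OF sym assms(1) _ that, of "\<chi> i. g i"] assms(4)
      by (simp add: H_def P_def D_def e_def norm_minus_commute)
    show "0 \<le> integral\<^sup>L gaussian_vec_measure H"
      using \<open>0 < D\<close> by (intro Bochner_Integration.integral_nonneg) (simp add: H_def)
  qed (simp add: H_def P_def integrals)
  also have "integral\<^sup>L gaussian_vec_measure H = 1 / sqrt (2 * pi)
      + (integral\<^sup>L gaussian_vec_measure (\<lambda>g. norm (A1 *v P g))
        + integral\<^sup>L gaussian_vec_measure (\<lambda>g. norm (A2 *v P g))) / D"
    by (simp add: H_def P_def integrals)
  also have "\<dots> \<le> 1 / sqrt (2 * pi) + (frob_norm A1 + frob_norm A2) / D"
    using integral_gaussian_vec_norm_orthogonal_projection_le[OF \<open>norm e = 1\<close>, of A1]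
      integral_gaussian_vec_norm_orthogonal_projection_le[OF \<open>norm e = 1\<close>, of A2] \<open>0 < D\<close>
    by (intro add_left_mono divide_right_mono) (auto simp: P_def)
  finally show ?thesis
    by (simp add: D_def e_def norm_minus_commute)
qed

end
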